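(* Fix a treatment value $t$ and let $(\bm{X}, Y(t))$ be random variables, where $Y(t)$ is real-valued with conditional density $f_{Y(t)}(z\mid \bm{x})$ given $\bm{X}=\bm{x}$, and $\bm{X}$ has distribution $\mathbb{P}_{\bm{X}}$. Let $K$ be a probability density on $\mathbb{R}$, let $h>0$, and define $\delta_h(u)=\frac{1}{h}K(u/h)$ and $$g_h(z\mid \bm{x}) = \mathbb{E}[\delta_h(z-Y(t))\mid \bm{X}=\bm{x}] = \int \frac{1}{h}K\Big(\frac{z-k}{h}\Big) f_{Y(t)}(k\mid \bm{x})\,dk.$$ Let $\widehat{g}_h(z\mid \bm{x})$ be an estimator of $g_h(z\mid\bm{x})$ constructed from $n$ i.i.d. samples (obtained by regressing $\delta_h(z-Y(t))$ on $\bm{X}$), and set $$Q_n(z) = \int \big|\widehat{g}_h(z\mid \bm{x}) - g_h(z\mid \bm{x})\big|^2\, d\mathbb{P}_{\bm{X}}(\bm{x}).$$ Assume: (A1) for every fixed $h>0$ and every fixed $z$, $Q_n(z)=o_p(1)$ as $n\to\infty$; (A2) $Q_n(z)$ is differentiable in $z$ and $\sup_z |\partial Q_n(z)/\partial z| = O_p(1)$; (A3) $\int u K(u)\,du = 0$ and $\int u^2 K(u)\,du<\infty$; (A4) for every $\bm{x}$, $z\mapsto f_{Y(t)}(z\mid\bm{x})$ is twice continuously differentiable, and $\int\int |f''_{Y(t)}(z\mid\bm{x})|^2\,d\mathbb{P}_{\bm{X}}(\bm{x})\,dz<\infty$, where $''$ denotes the second derivative in $z$. Then for any real numbers $a<b$,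 $$\int_a^b\int \big|\widehat{g}_h(z\mid \bm{x}) - f_{Y(t)}(z\mid \bm{x})\big|^2\, d\mathbb{P}_{\bm{X}}(\bm{x})\,dz \le o_p(1) + C h^4,$$ where $C$ is a constant that does not depend on $n$ or $h$.
   Context: $o_p(1)$ denotes a sequence of random variables converging to $0$ in probability as $n\to\infty$; $O_p(1)$ denotes a sequence of random variables that is bounded in probability (tight). *)

theory Defs
  imports "HOL-Probability.Probability"
begin

definition gh :: "(real \<Rightarrow> real) \<Rightarrow> ('x \<Rightarrow> real \<Rightarrow> real) \<Rightarrow> real \<Rightarrow> real \<Rightarrow> 'x \<Rightarrow> real" where
  "gh K f h z x = (\<integral>k. (1 / h) * K ((z - k) / h) * f x k \<partial>lborel)"

text \<open>Q_n(z) = integral over P_X of |ghat_h(z|x) - g_h(z|x)|^2.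
  ghat n h w z x : the estimator built from n samples, at bandwidth h, sample outcome w.\<close>
definition Qn :: "'x measure \<Rightarrow> (real \<Rightarrow> real) \<Rightarrow> ('x \<Rightarrow> real \<Rightarrow> real)
    \<Rightarrow> (nat \<Rightarrow> real \<Rightarrow> 'w \<Rightarrow> real \<Rightarrow> 'x \<Rightarrow> real) \<Rightarrow> nat \<Rightarrow> real \<Rightarrow> 'w \<Rightarrow> real \<Rightarrow> real" where
  "Qn PX K f ghat n h w z = (\<integral>x. (ghat n h w z x - gh K f h z x)^2 \<partial>PX)"

definition op_one :: "'w measure \<Rightarrow> (nat \<Rightarrow> 'w \<Rightarrow> real) \<Rightarrow> bool" where
  "op_one M Z \<longleftrightarrow> (\<forall>n. Z n \<in> borel_measurable M) \<and>
     (\<forall>e>0. (\<lambda>n. measure M {w \<in> space M. \<bar>Z n w\<bar> > e}) \<longlonglongrightarrow> 0)"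

text \<open>Z_n = O_p(1) (bounded in probability / tight), for possibly infinite
  nonnegative random quantities such as a supremum.\<close>
definition Op_one :: "'w measure \<Rightarrow> (nat \<Rightarrow> 'w \<Rightarrow> ennreal) \<Rightarrow> bool" where
  "Op_one M Z \<longleftrightarrow> (\<forall>n. Z n \<in> borel_measurable M) \<and>
     (\<forall>e>0. \<exists>c::real. eventually (\<lambda>n. measure M {w \<in> space M. Z n w > ennreal c} < e) sequentially)"

end

theory Submission
  imports Defs
begin

text \<open>Write \<open>ghat - f = (ghat - g_h) + (g_h - f)\<close>; the integrated squared error is then at most
  twice an estimation term plus twice a bias term.

  The estimation term is bounded by \<open>2 (b - a) sup_{[a,b]} Q_n\<close>, and this supremum is \<open>o_p(1)\<close>:
  on a grid of mesh \<open>(b - a)/N\<close> the finitely many values \<open>Q_n(z_i)\<close> are jointly \<open>o_p(1)\<close> by (A1),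
  and between grid points \<open>Q_n\<close> moves by at most \<open>(b - a)/N\<close> times \<open>sup |Q_n'|\<close>, which is \<open>O_p(1)\<close>
  by (A2); choosing \<open>N\<close> large makes this interpolation error small.

  For the bias, the substitution \<open>k = z - h u\<close> and Taylor's formula for \<open>f(. | x)\<close> at \<open>z\<close> leave
  only the second-order remainder, because \<open>K\<close> has total mass 1 and mean 0 (A3). That remainder is
  bounded by a \<open>K\<close>-weighted average of \<open>|f''|\<close> over windows of length \<open>2 |h u|\<close>; Cauchy-Schwarz
  against this weight and integration over \<open>z\<close> give
  \<open>\<integral>\<integral> |g_h - f|^2 \<le> (2 h^2 \<integral> u^2 K)^2 \<integral>\<integral> |f''|^2\<close>, which is \<open>C h^4\<close> by (A4).\<close>

section \<open>Bias of kernel smoothing\<close>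

lemma taylor_remainder_le_integral:
  fixes F F' q :: "real \<Rightarrow> real"
  assumes F': "\<And>y. DERIV F y :> F' y" and F'': "\<And>y. DERIV F' y :> q y"
    and q_cont: "continuous_on UNIV q"
  shows "ennreal \<bar>F (z + d) - F z - d * F' z\<bar> \<le>
     ennreal \<bar>d\<bar> * (\<integral>\<^sup>+t. ennreal (indicator {z - \<bar>d\<bar>..z + \<bar>d\<bar>} t * \<bar>q t\<bar>) \<partial>lborel)"
proof -
  obtain \<xi> where \<xi>: "\<bar>\<xi> - z\<bar> \<le> \<bar>d\<bar>" and mvt: "F (z + d) - F z - d * F' z = d * (F' \<xi> - F' z)"
  proof -
    have der: "DERIV (\<lambda>y. F y - y * F' z) y :> F' y - F' z" for y
      by (auto intro!: derivative_eq_intros F')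
    consider "d < 0" | "d = 0" | "d > 0" by linarith
    then show ?thesis
    proof cases
      case 1
      with MVT2[of "z + d" z _ "\<lambda>y. F' y - F' z"] der obtain \<xi>
        where "z + d < \<xi>" "\<xi> < z" "F z - z * F' z - (F (z + d) - (z + d) * F' z) = (z - (z + d)) * (F' \<xi> - F' z)"
        by auto
      with 1 show ?thesis by (intro that[of \<xi>]) (auto simp: algebra_simps)
    next
      case 2
      then show ?thesis by (intro that[of z]) auto
    next
      case 3
      with MVT2[of z "z + d" _ "\<lambda>y. F' y - F' z"] der obtain \<xi>
        where "z < \<xi>" "\<xi> < z + d" "F (z + d) - (z + d) * F' z - (F z - z * F' z) = (z + d - z) * (F' \<xi> - F' z)"
        by auto
      with 3 show ?thesis by (intro that[of \<xi>]) (auto simp: algebra_simps)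
    qed
  qed
  define lo hi where "lo = min \<xi> z" and "hi = max \<xi> z"
  have lo_hi: "lo \<le> hi" by (simp add: lo_def hi_def)
  have q_int: "integrable lborel (\<lambda>t. indicator {lo..hi} t *\<^sub>R q t)"
    using borel_integrable_atLeastAtMost'[OF continuous_on_subset[OF q_cont]]
    unfolding set_integrable_def by blast
  have "(\<integral>t. indicator {lo..hi} t *\<^sub>R q t \<partial>lborel) = F' hi - F' lo"
    by (rule integral_FTC_atLeastAtMost[OF lo_hi])
      (auto simp: has_real_derivative_iff_has_vector_derivative[symmetric]
        intro: DERIV_subset[OF F''] continuous_on_subset[OF q_cont])
  then have "\<bar>F' \<xi> - F' z\<bar> = norm (\<integral>t. indicator {lo..hi} t *\<^sub>R q t \<partial>lborel)"
    by (auto simp: lo_def hi_def min_def max_def)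
  also have "ennreal \<dots> \<le> (\<integral>\<^sup>+t. norm (indicator {lo..hi} t *\<^sub>R q t) \<partial>lborel)"
    by (rule integral_norm_bound_ennreal[OF q_int])
  also have "\<dots> \<le> (\<integral>\<^sup>+t. ennreal (indicator {z - \<bar>d\<bar>..z + \<bar>d\<bar>} t * \<bar>q t\<bar>) \<partial>lborel)"
    using \<xi> by (intro nn_integral_mono) (auto simp: indicator_def lo_def hi_def)
  finally show ?thesis
    unfolding mvt abs_mult ennreal_mult'[OF abs_ge_zero] by (intro mult_left_mono) auto
qed

lemma weighted_Cauchy_Schwarz_nn_integral:
  fixes w g :: "'a \<Rightarrow> real"
  assumes [measurable]: "w \<in> borel_measurable M" "g \<in> borel_measurable M"
    and w_nonneg: "\<And>x. w x \<ge> 0"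
  shows "(\<integral>\<^sup>+x. ennreal (w x * \<bar>g x\<bar>) \<partial>M)\<^sup>2
    \<le> (\<integral>\<^sup>+x. ennreal (w x) \<partial>M) * (\<integral>\<^sup>+x. ennreal (w x * (g x)\<^sup>2) \<partial>M)"
proof -
  have "ennreal (w x * \<bar>g x\<bar>) = ennreal (sqrt (w x)) * ennreal (sqrt (w x) * \<bar>g x\<bar>)"
    and "ennreal (w x) = (ennreal (sqrt (w x)))\<^sup>2"
    and "ennreal (w x * (g x)\<^sup>2) = (ennreal (sqrt (w x) * \<bar>g x\<bar>))\<^sup>2" for x
    using w_nonneg[of x]
    by (simp_all add: ennreal_mult[symmetric] ennreal_power power_mult_distrib mult.assoc[symmetric])
  then show ?thesis
    by (simp only:) (rule Cauchy_Schwarz_nn_integral; measurable)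
qed

text \<open>Taylor's formula at \<open>z\<close> with step \<open>-h u\<close> leaves a remainder bounded by \<open>\<bar>h u\<bar>\<close> times the
  integral of \<open>\<bar>F''\<bar>\<close> over \<open>[z - \<bar>h u\<bar>, z + \<bar>h u\<bar>]\<close>; averaging against \<open>K u\<close> gives this weight.\<close>
definition remainder_weight :: "(real \<Rightarrow> real) \<Rightarrow> real \<Rightarrow> real \<Rightarrow> real \<Rightarrow> real \<Rightarrow> real" where
  "remainder_weight K h z u t = (if \<bar>t - z\<bar> \<le> \<bar>h * u\<bar> then K u * \<bar>h * u\<bar> else 0)"

lemma remainder_weight_commute: "remainder_weight K h z u t = remainder_weight K h t u z"
  by (simp add: remainder_weight_def abs_minus_commute)

lemma remainder_weight_nonneg: "(\<And>u. K u \<ge> 0) \<Longrightarrow> remainder_weight K h z u t \<ge> 0"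
  by (simp add: remainder_weight_def)

lemma measurable_remainder_weight[measurable]:
  assumes [measurable]: "K \<in> borel_measurable borel" "h \<in> borel_measurable M" "z \<in> borel_measurable M"
    "u \<in> borel_measurable M" "t \<in> borel_measurable M"
  shows "(\<lambda>x. remainder_weight K (h x) (z x) (u x) (t x)) \<in> borel_measurable M"
  unfolding remainder_weight_def by measurable

lemma nn_integral_remainder_weight:
  assumes "\<And>u. K u \<ge> 0"
  shows "(\<integral>\<^sup>+t. remainder_weight K h z u t \<partial>lborel) = ennreal (2 * h\<^sup>2 * (u\<^sup>2 * K u))"
proof -
  have "(\<integral>\<^sup>+t. remainder_weight K h z u t \<partial>lborel)
      = (\<integral>\<^sup>+t. ennreal (K u * \<bar>h * u\<bar>) * indicator {z - \<bar>h * u\<bar>..z + \<bar>h * u\<bar>} t \<partial>lborel)"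
    by (intro nn_integral_cong) (auto simp: remainder_weight_def indicator_def abs_le_iff)
  also have "\<dots> = ennreal (K u * \<bar>h * u\<bar>) * ennreal (2 * \<bar>h * u\<bar>)"
    by (subst nn_integral_cmult_indicator) auto
  also have "\<dots> = ennreal (2 * h\<^sup>2 * (u\<^sup>2 * K u))"
  proof -
    have "K u * \<bar>h * u\<bar> * (2 * \<bar>h * u\<bar>) = 2 * h\<^sup>2 * (u\<^sup>2 * K u)"
      by (simp add: mult_ac power2_eq_square flip: abs_mult_self_eq[of "h * u"])
    then show ?thesis
      using assms[of u] by (simp flip: ennreal_mult)
  qed
  finally show ?thesis .
qed

lemma nn_integral_nn_integral_remainder_weight:
  assumes [measurable]: "K \<in> borel_measurable borel" and K_nonneg: "\<And>u. K u \<ge> 0"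
    and u2K_int: "integrable lborel (\<lambda>u. u\<^sup>2 * K u)"
  shows "(\<integral>\<^sup>+u. \<integral>\<^sup>+t. remainder_weight K h z u t \<partial>lborel \<partial>lborel)
          = ennreal (2 * h\<^sup>2 * (\<integral>u. u\<^sup>2 * K u \<partial>lborel))"
proof -
  have "(\<integral>\<^sup>+u. \<integral>\<^sup>+t. remainder_weight K h z u t \<partial>lborel \<partial>lborel)
      = ennreal (2 * h\<^sup>2) * (\<integral>\<^sup>+u. ennreal (u\<^sup>2 * K u) \<partial>lborel)"
    using K_nonneg by (simp add: nn_integral_remainder_weight ennreal_mult nn_integral_cmult)
  also have "(\<integral>\<^sup>+u. ennreal (u\<^sup>2 * K u) \<partial>lborel) = ennreal (\<integral>u. u\<^sup>2 * K u \<partial>lborel)"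
    using K_nonneg by (intro nn_integral_eq_integral u2K_int) auto
  finally show ?thesis
    using K_nonneg by (simp add: ennreal_mult integral_nonneg_AE)
qed

lemma kernel_smoothing_bias_le:
  fixes F F' q K :: "real \<Rightarrow> real"
  assumes F': "\<And>y. DERIV F y :> F' y" and F'': "\<And>y. DERIV F' y :> q y"
    and q_cont: "continuous_on UNIV q"
    and K_meas[measurable]: "K \<in> borel_measurable borel" and K_nonneg: "\<And>u. K u \<ge> 0"
    and K_int: "integrable lborel K" and K_one: "(\<integral>u. K u \<partial>lborel) = 1"
    and uK_int: "integrable lborel (\<lambda>u. u * K u)" and uK_zero: "(\<integral>u. u * K u \<partial>lborel) = 0"
    and h: "h > 0"
  shows "ennreal \<bar>(\<integral>k. (1 / h) * K ((z - k) / h) * F k \<partial>lborel) - F z\<bar>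
     \<le> (\<integral>\<^sup>+u. \<integral>\<^sup>+t. ennreal (remainder_weight K h z u t * \<bar>q t\<bar>) \<partial>lborel \<partial>lborel)"
    (is "_ \<le> ?B")
proof -
  define R where "R u = F (z + (-h) * u) - F z - ((-h) * u) * F' z" for u
  have [measurable]: "q \<in> borel_measurable borel"
    using q_cont by (rule borel_measurable_continuous_onI)
  have F_cont: "continuous_on UNIV F"
    using F' by (meson DERIV_isCont continuous_at_imp_continuous_on)
  have [measurable]: "R \<in> borel_measurable borel"
    unfolding R_def
    by (intro borel_measurable_continuous_onI continuous_intros continuous_on_compose2[OF F_cont]) auto
  have KR_le: "ennreal (norm (K u * R u))
      \<le> (\<integral>\<^sup>+t. ennreal (remainder_weight K h z u t * \<bar>q t\<bar>) \<partial>lborel)" for u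
  proof -
    have "ennreal (norm (K u * R u)) = ennreal (K u) * ennreal \<bar>R u\<bar>"
      using K_nonneg by (simp add: abs_mult ennreal_mult)
    also have "\<dots> \<le> ennreal (K u) * (ennreal \<bar>(-h) * u\<bar> *
        (\<integral>\<^sup>+t. ennreal (indicator {z - \<bar>(-h) * u\<bar>..z + \<bar>(-h) * u\<bar>} t * \<bar>q t\<bar>) \<partial>lborel))"
      unfolding R_def by (intro mult_left_mono taylor_remainder_le_integral[OF F' F'' q_cont]) auto
    also have "\<dots> = (\<integral>\<^sup>+t. ennreal (remainder_weight K h z u t * \<bar>q t\<bar>) \<partial>lborel)"
      using K_nonneg
      by (subst nn_integral_cmult[symmetric], measurable, subst nn_integral_cmult[symmetric], measurable)
        (intro nn_integral_cong, auto simp: remainder_weight_def indicator_def ennreal_mult[symmetric]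
          abs_le_iff abs_mult)
    finally show ?thesis .
  qed
  show ?thesis
  proof (cases "?B = \<infinity>")
    case False
    have KR_norm_le: "(\<integral>\<^sup>+u. norm (K u * R u) \<partial>lborel) \<le> ?B"
      by (intro nn_integral_mono KR_le)
    have KR_int: "integrable lborel (\<lambda>u. K u * R u)"
      by (rule integrableI_bounded)
        (use KR_norm_le False in \<open>auto simp: top.not_eq_extremum intro: le_less_trans\<close>)
    \<comment> \<open>After the substitution \<open>k = z - h u\<close>, the moment conditions on \<open>K\<close> cancel the constant and
      linear Taylor terms.\<close>
    have expand: "K u * F (z + (-h) * u) = F z * K u + ((-h) * F' z) * (u * K u) + K u * R u" for u
      unfolding R_def by (simp add: algebra_simps)
    have "(\<integral>k. (1 / h) * K ((z - k) / h) * F k \<partial>lborel)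
        = \<bar>-h\<bar> *\<^sub>R (\<integral>u. (1 / h) * K ((z - (z + (-h) * u)) / h) * F (z + (-h) * u) \<partial>lborel)"
      by (rule lborel_integral_real_affine) (use h in auto)
    also have "\<dots> = (\<integral>u. K u * F (z + (-h) * u) \<partial>lborel)"
      using h by (simp add: mult.assoc)
    also have "\<dots> = F z + (\<integral>u. K u * R u \<partial>lborel)"
      unfolding expand using K_int uK_int KR_int K_one uK_zero by simp
    finally have "ennreal \<bar>(\<integral>k. (1 / h) * K ((z - k) / h) * F k \<partial>lborel) - F z\<bar>
        = ennreal (norm (\<integral>u. K u * R u \<partial>lborel))"
      by simp
    also have "\<dots> \<le> (\<integral>\<^sup>+u. norm (K u * R u) \<partial>lborel)"
      by (rule integral_norm_bound_ennreal[OF KR_int])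
    finally show ?thesis using KR_norm_le by (rule order_trans)
  qed simp
qed

lemma kernel_smoothing_bias_sq_le:
  fixes F F' q K :: "real \<Rightarrow> real"
  assumes F': "\<And>y. DERIV F y :> F' y" and F'': "\<And>y. DERIV F' y :> q y"
    and q_cont: "continuous_on UNIV q"
    and K_meas[measurable]: "K \<in> borel_measurable borel" and K_nonneg: "\<And>u. K u \<ge> 0"
    and K_int: "integrable lborel K" and K_one: "(\<integral>u. K u \<partial>lborel) = 1"
    and uK_int: "integrable lborel (\<lambda>u. u * K u)" and uK_zero: "(\<integral>u. u * K u \<partial>lborel) = 0"
    and u2K_int: "integrable lborel (\<lambda>u. u\<^sup>2 * K u)"
    and h: "h > 0"
  shows "ennreal (((\<integral>k. (1 / h) * K ((z - k) / h) * F k \<partial>lborel) - F z)\<^sup>2)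
     \<le> ennreal (2 * h\<^sup>2 * (\<integral>u. u\<^sup>2 * K u \<partial>lborel)) *
        (\<integral>\<^sup>+u. \<integral>\<^sup>+t. ennreal (remainder_weight K h z u t * (q t)\<^sup>2) \<partial>lborel \<partial>lborel)"
proof -
  have [measurable]: "q \<in> borel_measurable borel"
    using q_cont by (rule borel_measurable_continuous_onI)
  have iterated: "(\<integral>\<^sup>+u. \<integral>\<^sup>+t. ennreal (G u t) \<partial>lborel \<partial>lborel)
      = (\<integral>\<^sup>+p. ennreal (G (fst p) (snd p)) \<partial>(lborel \<Otimes>\<^sub>M lborel))"
    if [measurable]: "case_prod G \<in> borel_measurable (lborel \<Otimes>\<^sub>M lborel)" for G
    using lborel.nn_integral_fst[of "\<lambda>p. ennreal (G (fst p) (snd p))" lborel]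
    by (simp add: split_beta')
  have "(\<integral>\<^sup>+u. \<integral>\<^sup>+t. ennreal (remainder_weight K h z u t * \<bar>q t\<bar>) \<partial>lborel \<partial>lborel)
      = (\<integral>\<^sup>+p. ennreal (remainder_weight K h z (fst p) (snd p) * \<bar>q (snd p)\<bar>) \<partial>(lborel \<Otimes>\<^sub>M lborel))"
    and "(\<integral>\<^sup>+u. \<integral>\<^sup>+t. ennreal (remainder_weight K h z u t) \<partial>lborel \<partial>lborel)
      = (\<integral>\<^sup>+p. ennreal (remainder_weight K h z (fst p) (snd p)) \<partial>(lborel \<Otimes>\<^sub>M lborel))"
    and "(\<integral>\<^sup>+u. \<integral>\<^sup>+t. ennreal (remainder_weight K h z u t * (q t)\<^sup>2) \<partial>lborel \<partial>lborel)
      = (\<integral>\<^sup>+p. ennreal (remainder_weight K h z (fst p) (snd p) * (q (snd p))\<^sup>2) \<partial>(lborel \<Otimes>\<^sub>M lborel))"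
    by (rule iterated; measurable)+
  note product_form = this
  have "ennreal (((\<integral>k. (1 / h) * K ((z - k) / h) * F k \<partial>lborel) - F z)\<^sup>2)
      = (ennreal \<bar>(\<integral>k. (1 / h) * K ((z - k) / h) * F k \<partial>lborel) - F z\<bar>)\<^sup>2"
    by (simp add: ennreal_power)
  also have "\<dots> \<le> (\<integral>\<^sup>+u. \<integral>\<^sup>+t. ennreal (remainder_weight K h z u t * \<bar>q t\<bar>) \<partial>lborel \<partial>lborel)\<^sup>2"
    by (intro power_mono kernel_smoothing_bias_le[OF F' F'' q_cont K_meas K_nonneg K_int K_one
          uK_int uK_zero h]) simp
  also have "\<dots> \<le> (\<integral>\<^sup>+u. \<integral>\<^sup>+t. ennreal (remainder_weight K h z u t) \<partial>lborel \<partial>lborel) *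
        (\<integral>\<^sup>+u. \<integral>\<^sup>+t. ennreal (remainder_weight K h z u t * (q t)\<^sup>2) \<partial>lborel \<partial>lborel)"
    unfolding product_form
    by (rule weighted_Cauchy_Schwarz_nn_integral) (measurable, intro remainder_weight_nonneg K_nonneg)
  finally show ?thesis
    by (simp only: nn_integral_nn_integral_remainder_weight[OF K_meas K_nonneg u2K_int])
qed

lemma nn_integral_kernel_smoothing_bias_sq_le:
  fixes F F' q K :: "real \<Rightarrow> real"
  assumes F': "\<And>y. DERIV F y :> F' y" and F'': "\<And>y. DERIV F' y :> q y"
    and q_cont: "continuous_on UNIV q"
    and K_meas[measurable]: "K \<in> borel_measurable borel" and K_nonneg: "\<And>u. K u \<ge> 0"
    and K_int: "integrable lborel K" and K_one: "(\<integral>u. K u \<partial>lborel) = 1"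
    and uK_int: "integrable lborel (\<lambda>u. u * K u)" and uK_zero: "(\<integral>u. u * K u \<partial>lborel) = 0"
    and u2K_int: "integrable lborel (\<lambda>u. u\<^sup>2 * K u)"
    and h: "h > 0"
  shows "(\<integral>\<^sup>+z. ennreal (((\<integral>k. (1 / h) * K ((z - k) / h) * F k \<partial>lborel) - F z)\<^sup>2) \<partial>lborel)
     \<le> ennreal ((2 * h\<^sup>2 * (\<integral>u. u\<^sup>2 * K u \<partial>lborel))\<^sup>2) * (\<integral>\<^sup>+t. ennreal ((q t)\<^sup>2) \<partial>lborel)"
proof -
  define c where "c = 2 * h\<^sup>2 * (\<integral>u. u\<^sup>2 * K u \<partial>lborel)"
  have c_nonneg: "c \<ge> 0"
    unfolding c_def using K_nonneg by (simp add: integral_nonneg_AE)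
  have [measurable]: "q \<in> borel_measurable borel"
    using q_cont by (rule borel_measurable_continuous_onI)
  have "(\<integral>\<^sup>+z. ennreal (((\<integral>k. (1 / h) * K ((z - k) / h) * F k \<partial>lborel) - F z)\<^sup>2) \<partial>lborel)
      \<le> (\<integral>\<^sup>+z. ennreal c * (\<integral>\<^sup>+u. \<integral>\<^sup>+t. ennreal (remainder_weight K h z u t * (q t)\<^sup>2)
          \<partial>lborel \<partial>lborel) \<partial>lborel)"
    unfolding c_def
    by (intro nn_integral_mono kernel_smoothing_bias_sq_le[OF F' F'' q_cont K_meas K_nonneg K_int
          K_one uK_int uK_zero u2K_int h])
  also have "\<dots> = ennreal c * (\<integral>\<^sup>+z. \<integral>\<^sup>+u. \<integral>\<^sup>+t. ennreal (remainder_weight K h z u t * (q t)\<^sup>2)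
      \<partial>lborel \<partial>lborel \<partial>lborel)"
    by (rule nn_integral_cmult) measurable
  also have "(\<integral>\<^sup>+z. \<integral>\<^sup>+u. \<integral>\<^sup>+t. ennreal (remainder_weight K h z u t * (q t)\<^sup>2) \<partial>lborel \<partial>lborel \<partial>lborel)
      = (\<integral>\<^sup>+u. \<integral>\<^sup>+t. \<integral>\<^sup>+z. ennreal (remainder_weight K h z u t * (q t)\<^sup>2) \<partial>lborel \<partial>lborel \<partial>lborel)"
    by (subst lborel_pair.Fubini', measurable, intro nn_integral_cong lborel_pair.Fubini', measurable)
  also have "(\<integral>\<^sup>+u. \<integral>\<^sup>+t. \<integral>\<^sup>+z. ennreal (remainder_weight K h z u t * (q t)\<^sup>2)
      \<partial>lborel \<partial>lborel \<partial>lborel) = ennreal c * (\<integral>\<^sup>+t. ennreal ((q t)\<^sup>2) \<partial>lborel)"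
  proof -
    have "(\<integral>\<^sup>+z. ennreal (remainder_weight K h z u t * (q t)\<^sup>2) \<partial>lborel)
        = ennreal (2 * h\<^sup>2 * (u\<^sup>2 * K u)) * ennreal ((q t)\<^sup>2)" for u t
      using remainder_weight_nonneg[OF K_nonneg]
      by (simp add: ennreal_mult nn_integral_multc remainder_weight_commute[of K h _ u t]
          nn_integral_remainder_weight[OF K_nonneg])
    moreover have "(\<integral>\<^sup>+u. ennreal (2 * h\<^sup>2 * (u\<^sup>2 * K u)) \<partial>lborel) = ennreal c"
      using nn_integral_nn_integral_remainder_weight[OF K_meas K_nonneg u2K_int, of h z]
      by (simp add: nn_integral_remainder_weight[OF K_nonneg] c_def)
    ultimately show ?thesis
      by (simp add: nn_integral_cmult nn_integral_multc)
  qed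
  also have "ennreal c * (ennreal c * (\<integral>\<^sup>+t. ennreal ((q t)\<^sup>2) \<partial>lborel))
      = ennreal (c\<^sup>2) * (\<integral>\<^sup>+t. ennreal ((q t)\<^sup>2) \<partial>lborel)"
    using c_nonneg by (simp add: power2_eq_square ennreal_mult mult.assoc)
  finally show ?thesis
    unfolding c_def .
qed

lemma measurable_deriv_pair:
  fixes g :: "'x \<Rightarrow> real \<Rightarrow> real"
  assumes g_meas: "(\<lambda>(x, t). g x t) \<in> borel_measurable (N \<Otimes>\<^sub>M lborel)"
    and g_diff: "\<And>x t. g x differentiable (at t)"
  shows "(\<lambda>(x, t). deriv (g x) t) \<in> borel_measurable (N \<Otimes>\<^sub>M lborel)"
proof (rule borel_measurable_LIMSEQ_real)
  fix p :: "'x \<times> real"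
  have "((\<lambda>s. (g (fst p) (snd p + s) - g (fst p) (snd p)) / s) \<longlongrightarrow> deriv (g (fst p)) (snd p)) (at 0)"
    using g_diff DERIV_deriv_iff_real_differentiable unfolding DERIV_def by blast
  moreover have "filterlim (\<lambda>i. inverse (real (Suc i))) (at 0) sequentially"
    unfolding filterlim_at using LIMSEQ_inverse_real_of_nat by auto
  ultimately show "(\<lambda>i. (g (fst p) (snd p + inverse (real (Suc i))) - g (fst p) (snd p)) / inverse (real (Suc i)))
      \<longlonglongrightarrow> (case p of (x, t) \<Rightarrow> deriv (g x) t)"
    by (auto simp: split_beta' intro: filterlim_compose)
next
  fix i :: nat
  have g_meas'[measurable]: "(\<lambda>p. g (fst p) (snd p)) \<in> borel_measurable (N \<Otimes>\<^sub>M lborel)"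
    using g_meas by (simp add: split_beta')
  have "(\<lambda>p. (fst p, snd p + inverse (real (Suc i)))) \<in> measurable (N \<Otimes>\<^sub>M lborel) (N \<Otimes>\<^sub>M lborel)"
    by measurable
  from measurable_compose[OF this g_meas'] have [measurable]:
    "(\<lambda>p. g (fst p) (snd p + inverse (real (Suc i)))) \<in> borel_measurable (N \<Otimes>\<^sub>M lborel)"
    by simp
  show "(\<lambda>p. (g (fst p) (snd p + inverse (real (Suc i))) - g (fst p) (snd p)) / inverse (real (Suc i)))
      \<in> borel_measurable (N \<Otimes>\<^sub>M lborel)"
    by measurable
qed

lemma measurable_gh:
  fixes PX :: "'x measure" and K :: "real \<Rightarrow> real" and f :: "'x \<Rightarrow> real \<Rightarrow> real"
  assumes f_meas: "(\<lambda>(x, z). f x z) \<in> borel_measurable (PX \<Otimes>\<^sub>M lborel)"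
    and K_meas[measurable]: "K \<in> borel_measurable borel"
  shows "(\<lambda>(z, x). gh K f h z x) \<in> borel_measurable (lborel \<Otimes>\<^sub>M PX)"
proof -
  have "(\<lambda>p. (snd (fst p), snd p)) \<in> measurable ((lborel \<Otimes>\<^sub>M PX) \<Otimes>\<^sub>M lborel) (PX \<Otimes>\<^sub>M lborel)"
    by measurable
  from measurable_compose[OF this f_meas]
  have [measurable]: "(\<lambda>p. f (snd (fst p)) (snd p)) \<in> borel_measurable ((lborel \<Otimes>\<^sub>M PX) \<Otimes>\<^sub>M lborel)"
    by simp
  show ?thesis
    unfolding gh_def split_beta'
    by (rule lborel.borel_measurable_lebesgue_integral[where f="\<lambda>p k. _ (fst p) k * f (snd p) k",
          unfolded split_beta']) measurable
qed

lemma measurable_conditional_bias_sq: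
  fixes PX :: "'x measure" and K :: "real \<Rightarrow> real" and f :: "'x \<Rightarrow> real \<Rightarrow> real"
  assumes f_meas: "(\<lambda>(x, z). f x z) \<in> borel_measurable (PX \<Otimes>\<^sub>M lborel)"
    and K_meas: "K \<in> borel_measurable borel"
  shows "(\<lambda>(z, x). (gh K f h z x - f x z)\<^sup>2) \<in> borel_measurable (lborel \<Otimes>\<^sub>M PX)"
proof -
  have [measurable]: "(\<lambda>p. f (snd p) (fst p)) \<in> borel_measurable (lborel \<Otimes>\<^sub>M PX)"
    using measurable_pair_swap[OF f_meas] by (simp add: split_beta')
  have [measurable]: "(\<lambda>p. gh K f h (fst p) (snd p)) \<in> borel_measurable (lborel \<Otimes>\<^sub>M PX)"
    using measurable_gh[OF f_meas K_meas] by (simp add: split_beta')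
  show ?thesis
    by (simp add: split_beta') measurable
qed

lemma nn_integral_conditional_bias_sq_le:
  fixes PX :: "'x measure" and K :: "real \<Rightarrow> real" and f :: "'x \<Rightarrow> real \<Rightarrow> real"
  assumes PX: "sigma_finite_measure PX"
    and f_meas: "(\<lambda>(x, z). f x z) \<in> borel_measurable (PX \<Otimes>\<^sub>M lborel)"
    and f_diff1: "\<And>x z. (f x) differentiable (at z)"
    and f_diff2: "\<And>x z. (deriv (f x)) differentiable (at z)"
    and f_cont2: "\<And>x. continuous_on UNIV (deriv (deriv (f x)))"
    and K_meas[measurable]: "K \<in> borel_measurable borel" and K_nonneg: "\<And>u. K u \<ge> 0"
    and K_int: "integrable lborel K" and K_one: "(\<integral>u. K u \<partial>lborel) = 1"
    and uK_int: "integrable lborel (\<lambda>u. u * K u)" and uK_zero: "(\<integral>u. u * K u \<partial>lborel) = 0"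
    and u2K_int: "integrable lborel (\<lambda>u. u\<^sup>2 * K u)"
    and h: "h > 0"
  shows "(\<integral>\<^sup>+z. \<integral>\<^sup>+x. ennreal ((gh K f h z x - f x z)\<^sup>2) \<partial>PX \<partial>lborel)
    \<le> ennreal ((2 * h\<^sup>2 * (\<integral>u. u\<^sup>2 * K u \<partial>lborel))\<^sup>2) *
       (\<integral>\<^sup>+z. \<integral>\<^sup>+x. ennreal ((deriv (deriv (f x)) z)\<^sup>2) \<partial>PX \<partial>lborel)"
proof -
  interpret PX: sigma_finite_measure PX by (rule PX)
  interpret pair_sigma_finite lborel PX by unfold_locales
  define c where "c = 2 * h\<^sup>2 * (\<integral>u. u\<^sup>2 * K u \<partial>lborel)"
  have [measurable]: "(\<lambda>p. (gh K f h (fst p) (snd p) - f (snd p) (fst p))\<^sup>2) \<in> borel_measurable (lborel \<Otimes>\<^sub>M PX)"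
    using measurable_conditional_bias_sq[OF f_meas K_meas] by (simp add: split_beta')
  have f''_meas: "(\<lambda>(x, z). deriv (deriv (f x)) z) \<in> borel_measurable (PX \<Otimes>\<^sub>M lborel)"
    by (intro measurable_deriv_pair f_meas f_diff1 f_diff2)
  then have [measurable]: "(\<lambda>p. deriv (deriv (f (fst p))) (snd p)) \<in> borel_measurable (PX \<Otimes>\<^sub>M lborel)"
    by (simp add: split_beta')
  have [measurable]: "(\<lambda>p. deriv (deriv (f (snd p))) (fst p)) \<in> borel_measurable (lborel \<Otimes>\<^sub>M PX)"
    using measurable_pair_swap[OF f''_meas] by (simp add: split_beta')
  have "(\<integral>\<^sup>+z. \<integral>\<^sup>+x. ennreal ((gh K f h z x - f x z)\<^sup>2) \<partial>PX \<partial>lborel)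
      = (\<integral>\<^sup>+x. \<integral>\<^sup>+z. ennreal ((gh K f h z x - f x z)\<^sup>2) \<partial>lborel \<partial>PX)"
    by (rule Fubini'[symmetric]) (simp add: split_beta'; measurable)
  also have "\<dots> \<le> (\<integral>\<^sup>+x. ennreal (c\<^sup>2) * (\<integral>\<^sup>+z. ennreal ((deriv (deriv (f x)) z)\<^sup>2) \<partial>lborel) \<partial>PX)"
  proof (intro nn_integral_mono)
    fix x
    have "DERIV (f x) z :> deriv (f x) z" and "DERIV (deriv (f x)) z :> deriv (deriv (f x)) z" for z
      using f_diff1 f_diff2 DERIV_deriv_iff_real_differentiable by blast+
    then show "(\<integral>\<^sup>+z. ennreal ((gh K f h z x - f x z)\<^sup>2) \<partial>lborel)
        \<le> ennreal (c\<^sup>2) * (\<integral>\<^sup>+z. ennreal ((deriv (deriv (f x)) z)\<^sup>2) \<partial>lborel)"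
      unfolding gh_def c_def
      by (intro nn_integral_kernel_smoothing_bias_sq_le f_cont2 K_meas K_nonneg K_int K_one uK_int
          uK_zero u2K_int h)
  qed
  also have "\<dots> = ennreal (c\<^sup>2) * (\<integral>\<^sup>+x. \<integral>\<^sup>+z. ennreal ((deriv (deriv (f x)) z)\<^sup>2) \<partial>lborel \<partial>PX)"
    by (rule nn_integral_cmult) measurable
  also have "(\<integral>\<^sup>+x. \<integral>\<^sup>+z. ennreal ((deriv (deriv (f x)) z)\<^sup>2) \<partial>lborel \<partial>PX)
      = (\<integral>\<^sup>+z. \<integral>\<^sup>+x. ennreal ((deriv (deriv (f x)) z)\<^sup>2) \<partial>PX \<partial>lborel)"
    by (rule Fubini') (simp add: split_beta'; measurable)
  finally show ?thesis
    unfolding c_def .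
qed


section \<open>Uniform smallness in probability on an interval\<close>

text \<open>Suprema over \<open>[a, b]\<close> are taken over the countable set \<open>\<rat> \<inter> [a, b]\<close>, which keeps them
  measurable in the sample point; for continuous functions nothing is lost.\<close>

lemma le_enn2real_SUP_Rats_Icc:
  fixes g :: "real \<Rightarrow> real"
  assumes "a < b" and g_cont: "continuous_on UNIV g" and z: "z \<in> {a..b}"
  shows "g z \<le> enn2real (SUP y\<in>\<rat> \<inter> {a..b}. ennreal (g y))"
proof -
  let ?S = "SUP y\<in>\<rat> \<inter> {a..b}. ennreal (g y)"
  have "closed {y. ennreal (g y) \<le> ?S}"
    by (intro closed_Collect_le continuous_on_ennreal g_cont continuous_on_const)
  moreover have "\<rat> \<inter> {a..b} \<subseteq> {y. ennreal (g y) \<le> ?S}"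
    by (auto intro: SUP_upper)
  ultimately have "closure (\<rat> \<inter> {a..b}) \<subseteq> {y. ennreal (g y) \<le> ?S}"
    by (rule closure_minimal[rotated])
  moreover have "{a..b} \<subseteq> closure (\<rat> \<inter> {a..b})"
  proof -
    have "{a<..<b} \<subseteq> closure ({a<..<b} \<inter> \<rat>)"
      using open_Int_closure_subset[of "{a<..<b}" \<rat>] by (simp add: Rats_closure_real)
    then have "closure {a<..<b} \<subseteq> closure ({a<..<b} \<inter> \<rat>)"
      by (metis closure_closure closure_mono)
    also have "\<dots> \<subseteq> closure (\<rat> \<inter> {a..b})"
      by (intro closure_mono) auto
    finally show ?thesis
      using closure_greaterThanLessThan[OF \<open>a < b\<close>] by simp
  qed
  ultimately have le_S: "ennreal (g z) \<le> ?S"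
    using z by auto
  obtain m where "\<And>y. y \<in> {a..b} \<Longrightarrow> g y \<le> g m"
    using continuous_attains_sup[OF compact_Icc _ continuous_on_subset[OF g_cont]] \<open>a < b\<close>
    by (metis atLeastAtMost_iff empty_iff less_eq_real_def subset_UNIV)
  then have "?S < \<top>"
    by (intro le_less_trans[OF SUP_least ennreal_less_top[of "g m"]] ennreal_leI) auto
  show ?thesis
  proof (cases "g z \<ge> 0")
    case True
    then have "g z = enn2real (ennreal (g z))"
      by simp
    also have "\<dots> \<le> enn2real ?S"
      using le_S \<open>?S < \<top>\<close> by (rule enn2real_mono)
    finally show ?thesis .
  qed (simp add: order_trans[OF _ enn2real_nonneg])
qed

lemma le_grid_values_plus_deriv_bound:
  fixes g :: "real \<Rightarrow> real"
  assumes "a < b" and "N > 0"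
    and g_diff: "\<And>y. g differentiable (at y)" and g'_le: "\<And>y. \<bar>deriv g y\<bar> \<le> c"
    and grid: "\<And>i. i \<le> N \<Longrightarrow> g (a + real i * ((b - a) / real N)) \<le> e"
    and z: "z \<in> {a..b}"
  shows "g z \<le> e + c * ((b - a) / real N)"
proof -
  define \<delta> where "\<delta> = (b - a) / real N"
  define i where "i = nat \<lfloor>(z - a) / \<delta>\<rfloor>"
  have \<delta>: "\<delta> > 0"
    using assms by (simp add: \<delta>_def)
  have "(z - a) / \<delta> \<ge> 0"
    using z \<delta> by simp
  then have "real i \<le> (z - a) / \<delta>" "(z - a) / \<delta> < real i + 1"
    by (simp_all add: i_def)
  moreover have "(z - a) / \<delta> \<le> real N"
    using z assms by (simp add: \<delta>_def field_simps)
  ultimately have "i \<le> N" and near: "0 \<le> z - (a + real i * \<delta>)" "z - (a + real i * \<delta>) \<le> \<delta>"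
    using \<delta> by (linarith, simp_all add: field_simps)
  have "\<bar>g z - g (a + real i * \<delta>)\<bar> \<le> c * \<bar>z - (a + real i * \<delta>)\<bar>"
    using field_differentiable_bound[of UNIV g "deriv g" c] g_diff g'_le
    by (simp add: DERIV_deriv_iff_real_differentiable)
  also have "\<dots> \<le> c * \<delta>"
    using near order_trans[OF abs_ge_zero g'_le] by (intro mult_left_mono) auto
  finally show ?thesis
    using grid[OF \<open>i \<le> N\<close>] by (simp add: \<delta>_def)
qed

lemma enn2real_SUP_Rats_Icc_le_grid_values:
  fixes g :: "real \<Rightarrow> real"
  assumes "a < b" and "N > 0"
    and g_diff: "\<And>y. g differentiable (at y)" and g'_le: "(SUP y. ennreal \<bar>deriv g y\<bar>) \<le> ennreal c"
    and grid: "\<And>i. i \<le> N \<Longrightarrow> \<bar>g (a + real i * ((b - a) / real N))\<bar> \<le> e"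
  shows "enn2real (SUP z\<in>\<rat> \<inter> {a..b}. ennreal (g z)) \<le> e + max c 0 * ((b - a) / real N)"
proof (rule enn2real_leI)
  have "ennreal \<bar>deriv g y\<bar> \<le> ennreal c" for y
    using order_trans[OF SUP_upper g'_le] by simp
  then have "\<bar>deriv g y\<bar> \<le> max c 0" for y
    using ennreal_le_iff2 by (metis max.cobounded1 max.cobounded2 order_trans)
  then have "g z \<le> e + max c 0 * ((b - a) / real N)" if "z \<in> {a..b}" for z
    using le_grid_values_plus_deriv_bound[OF \<open>a < b\<close> \<open>N > 0\<close> g_diff _ _ that] grid abs_le_D1
    by blast
  then show "(SUP z\<in>\<rat> \<inter> {a..b}. ennreal (g z)) \<le> ennreal (e + max c 0 * ((b - a) / real N))"
    by (intro SUP_least ennreal_leI) auto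
  show "0 \<le> e + max c 0 * ((b - a) / real N)"
    using grid[of 0] \<open>a < b\<close> by (intro add_nonneg_nonneg mult_nonneg_nonneg) auto
qed

lemma op_one_cmult:
  assumes "op_one M S" and "c > 0"
  shows "op_one M (\<lambda>n w. c * S n w)"
proof -
  have "{w \<in> space M. \<bar>c * S n w\<bar> > e} = {w \<in> space M. \<bar>S n w\<bar> > e / c}" for n e
    using \<open>c > 0\<close> by (auto simp: abs_mult field_simps)
  with assms show ?thesis
    unfolding op_one_def by (auto simp: divide_pos_pos intro!: borel_measurable_times)
qed

lemma op_one_SUP_Rats_Icc:
  fixes M :: "'w measure" and Q :: "nat \<Rightarrow> 'w \<Rightarrow> real \<Rightarrow> real"
  assumes M: "prob_space M" and "a < b"
    and Q_op: "\<And>z. op_one M (\<lambda>n w. Q n w z)"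
    and Q_diff: "\<And>n w z. w \<in> space M \<Longrightarrow> Q n w differentiable (at z)"
    and Q'_Op: "Op_one M (\<lambda>n w. SUP z. ennreal \<bar>deriv (Q n w) z\<bar>)"
  shows "op_one M (\<lambda>n w. enn2real (SUP z\<in>\<rat> \<inter> {a..b}. ennreal (Q n w z)))"
proof -
  interpret prob_space M by (rule M)
  define S where "S n w = enn2real (SUP z\<in>\<rat> \<inter> {a..b}. ennreal (Q n w z))" for n w
  define L where "L n w = (SUP z. ennreal \<bar>deriv (Q n w) z\<bar>)" for n w
  have [measurable]: "(\<lambda>w. Q n w z) \<in> borel_measurable M" for n z
    using Q_op[of z] unfolding op_one_def by blast
  have [measurable]: "S n \<in> borel_measurable M" for n
    unfolding S_def
    by (intro borel_measurable_enn2real borel_measurable_SUP countable_Int1 countable_rat) measurable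
  have [measurable]: "L n \<in> borel_measurable M" for n
    using Q'_Op unfolding Op_one_def L_def by blast
  have small_S: "{w \<in> space M. \<bar>S n w\<bar> > e}
      \<subseteq> {w \<in> space M. L n w > ennreal c} \<union>
         (\<Union>i\<in>{..N}. {w \<in> space M. \<bar>Q n w (a + real i * ((b - a) / real N))\<bar> > e / 2})"
    if "N > 0" "max c 0 * ((b - a) / real N) < e / 2" for n N c e
  proof (intro subsetI)
    fix w assume w: "w \<in> {w \<in> space M. \<bar>S n w\<bar> > e}"
    show "w \<in> {w \<in> space M. L n w > ennreal c} \<union>
        (\<Union>i\<in>{..N}. {w \<in> space M. \<bar>Q n w (a + real i * ((b - a) / real N))\<bar> > e / 2})"
    proof (rule ccontr)
      assume "\<not> ?thesis"
      with w have "L n w \<le> ennreal c"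
        and "\<And>i. i \<le> N \<Longrightarrow> \<bar>Q n w (a + real i * ((b - a) / real N))\<bar> \<le> e / 2"
        by (auto simp: not_less)
      from enn2real_SUP_Rats_Icc_le_grid_values[OF \<open>a < b\<close> \<open>N > 0\<close> Q_diff this[unfolded L_def]] w
      have "S n w \<le> e / 2 + max c 0 * ((b - a) / real N)"
        by (simp add: S_def)
      moreover have "e < S n w"
        using w by (simp add: S_def)
      ultimately show False
        using that(2) by linarith
    qed
  qed
  have "(\<lambda>n. measure M {w \<in> space M. \<bar>S n w\<bar> > e}) \<longlonglongrightarrow> 0" if e: "e > 0" for e
  proof (rule order_tendstoI)
    show "\<forall>\<^sub>F n in sequentially. y < measure M {w \<in> space M. \<bar>S n w\<bar> > e}" if "y < 0" for y
      using that by (intro always_eventually allI less_le_trans[OF _ measure_nonneg])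
  next
    fix \<eta> :: real assume "\<eta> > 0"
    then obtain c where ev_L: "\<forall>\<^sub>F n in sequentially. measure M {w \<in> space M. L n w > ennreal c} < \<eta> / 2"
      using Q'_Op unfolding Op_one_def L_def by (meson half_gt_zero)
    obtain N :: nat where N: "2 * max c 0 * (b - a) / e < real N"
      using reals_Archimedean2 by blast
    moreover have "0 \<le> 2 * max c 0 * (b - a) / e"
      using \<open>a < b\<close> e by simp
    ultimately have "N > 0"
      by (metis of_nat_0_less_iff order.strict_trans1)
    moreover have "max c 0 * ((b - a) / real N) < e / 2"
      using N \<open>N > 0\<close> e by (simp add: field_simps)
    note small_S = small_S[OF \<open>N > 0\<close> this]
    have "(\<lambda>n. \<Sum>i\<le>N. measure M {w \<in> space M. \<bar>Q n w (a + real i * ((b - a) / real N))\<bar> > e / 2})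
        \<longlonglongrightarrow> 0"
      using Q_op e unfolding op_one_def by (intro tendsto_null_sum) (blast intro: half_gt_zero)
    then have "\<forall>\<^sub>F n in sequentially.
        (\<Sum>i\<le>N. measure M {w \<in> space M. \<bar>Q n w (a + real i * ((b - a) / real N))\<bar> > e / 2}) < \<eta> / 2"
      using \<open>\<eta> > 0\<close> by (intro order_tendstoD(2)) auto
    with ev_L show "\<forall>\<^sub>F n in sequentially. measure M {w \<in> space M. \<bar>S n w\<bar> > e} < \<eta>"
    proof eventually_elim
      case (elim n)
      have "measure M {w \<in> space M. \<bar>S n w\<bar> > e}
          \<le> measure M {w \<in> space M. L n w > ennreal c} + measure M
              (\<Union>i\<in>{..N}. {w \<in> space M. \<bar>Q n w (a + real i * ((b - a) / real N))\<bar> > e / 2})"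
        by (rule order_trans[OF finite_measure_mono[OF small_S] measure_Un_le]) measurable
      also have "measure M (\<Union>i\<in>{..N}. {w \<in> space M. \<bar>Q n w (a + real i * ((b - a) / real N))\<bar> > e / 2})
          \<le> (\<Sum>i\<le>N. measure M {w \<in> space M. \<bar>Q n w (a + real i * ((b - a) / real N))\<bar> > e / 2})"
        by (intro measure_UNION_le) auto
      finally show ?case
        using elim by linarith
    qed
  qed
  then show ?thesis
    unfolding op_one_def S_def[symmetric] by simp
qed


section \<open>Integrated squared error\<close>

lemma nn_integral_Icc_sq_error_le:
  fixes PX :: "'x measure" and G g :: "real \<Rightarrow> 'x \<Rightarrow> real" and f :: "'x \<Rightarrow> real \<Rightarrow> real"
  assumes PX: "sigma_finite_measure PX" and "a \<le> b"
    and G_int: "\<And>z. integrable PX (\<lambda>x. (G z x - g z x)\<^sup>2)"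
    and G_le: "\<And>z. z \<in> {a..b} \<Longrightarrow> (\<integral>x. (G z x - g z x)\<^sup>2 \<partial>PX) \<le> s"
    and bias_meas: "(\<lambda>(z, x). (g z x - f x z)\<^sup>2) \<in> borel_measurable (lborel \<Otimes>\<^sub>M PX)"
  shows "(\<integral>\<^sup>+z\<in>{a..b}. (\<integral>\<^sup>+x. ennreal ((G z x - f x z)\<^sup>2) \<partial>PX) \<partial>lborel)
    \<le> ennreal (2 * (b - a) * s) + 2 * (\<integral>\<^sup>+z. \<integral>\<^sup>+x. ennreal ((g z x - f x z)\<^sup>2) \<partial>PX \<partial>lborel)"
proof -
  interpret PX: sigma_finite_measure PX by (rule PX)
  define B where "B z = (\<integral>\<^sup>+x. ennreal ((g z x - f x z)\<^sup>2) \<partial>PX)" for z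
  have [measurable]: "B \<in> borel_measurable lborel"
    unfolding B_def using bias_meas by (intro PX.borel_measurable_nn_integral) (simp add: split_beta')
  have "0 \<le> (\<integral>x. (G a x - g a x)\<^sup>2 \<partial>PX)"
    by (intro integral_nonneg_AE) simp
  also have "\<dots> \<le> s"
    using \<open>a \<le> b\<close> by (intro G_le) simp
  finally have "s \<ge> 0" .
  have "(\<integral>\<^sup>+x. ennreal ((G z x - f x z)\<^sup>2) \<partial>PX) \<le> ennreal (2 * s) + 2 * B z" if "z \<in> {a..b}" for z
  proof -
    define D E where "D x = (G z x - g z x)\<^sup>2" and "E x = (g z x - f x z)\<^sup>2" for x
    have [measurable]: "D \<in> borel_measurable PX"
      unfolding D_def using G_int by blast
    have "(\<lambda>x. (z, x)) \<in> measurable PX (lborel \<Otimes>\<^sub>M PX)"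
      by measurable
    from measurable_compose[OF this bias_meas] have [measurable]: "E \<in> borel_measurable PX"
      by (simp add: E_def[abs_def])
    have "ennreal ((G z x - f x z)\<^sup>2) \<le> ennreal (2 * D x + 2 * E x)" for x
      using zero_le_power2[of "G z x - 2 * g z x + f x z"]
      by (intro ennreal_leI) (simp add: D_def E_def power2_eq_square algebra_simps)
    also have "ennreal (2 * D x + 2 * E x) = ennreal (2 * D x) + 2 * ennreal (E x)" for x
      by (simp add: D_def E_def ennreal_plus ennreal_mult')
    finally have "(\<integral>\<^sup>+x. ennreal ((G z x - f x z)\<^sup>2) \<partial>PX)
        \<le> (\<integral>\<^sup>+x. ennreal (2 * D x) + 2 * ennreal (E x) \<partial>PX)"
      by (intro nn_integral_mono)
    also have "\<dots> = (\<integral>\<^sup>+x. ennreal (2 * D x) \<partial>PX) + 2 * (\<integral>\<^sup>+x. ennreal (E x) \<partial>PX)"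
      by (simp add: nn_integral_add nn_integral_cmult)
    also have "(\<integral>\<^sup>+x. ennreal (2 * D x) \<partial>PX) = ennreal (2 * (\<integral>x. D x \<partial>PX))"
      using G_int by (subst nn_integral_eq_integral) (auto simp: D_def[abs_def])
    also have "\<dots> \<le> ennreal (2 * s)"
      using G_le[OF that] by (intro ennreal_leI) (simp add: D_def[abs_def])
    finally show ?thesis
      by (simp add: B_def E_def add_right_mono)
  qed
  then have "(\<integral>\<^sup>+z\<in>{a..b}. (\<integral>\<^sup>+x. ennreal ((G z x - f x z)\<^sup>2) \<partial>PX) \<partial>lborel)
      \<le> (\<integral>\<^sup>+z. ennreal (2 * s) * indicator {a..b} z + 2 * B z \<partial>lborel)"
    by (intro nn_integral_mono) (auto simp: indicator_def)
  also have "\<dots> = ennreal (2 * s) * ennreal (b - a) + 2 * (\<integral>\<^sup>+z. B z \<partial>lborel)"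
    using \<open>a \<le> b\<close> by (simp add: nn_integral_add nn_integral_cmult)
  also have "ennreal (2 * s) * ennreal (b - a) = ennreal (2 * (b - a) * s)"
    using \<open>s \<ge> 0\<close> \<open>a \<le> b\<close> by (simp add: mult_ac flip: ennreal_mult)
  finally show ?thesis
    by (simp add: B_def)
qed

theorem theorem1:
  fixes M :: "'w measure" and PX :: "'x measure"
    and K :: "real \<Rightarrow> real" and f :: "'x \<Rightarrow> real \<Rightarrow> real"
    and ghat :: "nat \<Rightarrow> real \<Rightarrow> 'w \<Rightarrow> real \<Rightarrow> 'x \<Rightarrow> real"
  assumes M: "prob_space M"
    and PX: "prob_space PX"
    and f_meas: "(\<lambda>(x, z). f x z) \<in> borel_measurable (PX \<Otimes>\<^sub>M lborel)"
    and f_nonneg: "\<And>x z. f x z \<ge> 0"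
    and f_int: "\<And>x. integrable lborel (f x)"
    and f_one: "\<And>x. (\<integral>z. f x z \<partial>lborel) = 1"
    and K_meas: "K \<in> borel_measurable lborel"
    and K_nonneg: "\<And>u. K u \<ge> 0"
    and K_int: "integrable lborel K"
    and K_one: "(\<integral>u. K u \<partial>lborel) = 1"
    and Q_int: "\<And>n h w z. h > 0 \<Longrightarrow> w \<in> space M \<Longrightarrow>
                 integrable PX (\<lambda>x. (ghat n h w z x - gh K f h z x)^2)"
    and A1: "\<And>h z. h > 0 \<Longrightarrow> op_one M (\<lambda>n w. Qn PX K f ghat n h w z)"
    and A2_diff: "\<And>n h w z. h > 0 \<Longrightarrow> w \<in> space M \<Longrightarrow>
                   (Qn PX K f ghat n h w) differentiable (at z)"
    and A2_bound: "\<And>h. h > 0 \<Longrightarrow>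
                   Op_one M (\<lambda>n w. SUP z. ennreal \<bar>deriv (Qn PX K f ghat n h w) z\<bar>)"
    and A3_first: "integrable lborel (\<lambda>u. u * K u)" "(\<integral>u. u * K u \<partial>lborel) = 0"
    and A3_second: "integrable lborel (\<lambda>u. u^2 * K u)"
    and A4_diff1: "\<And>x z. (f x) differentiable (at z)"
    and A4_diff2: "\<And>x z. (deriv (f x)) differentiable (at z)"
    and A4_cont: "\<And>x. continuous_on UNIV (deriv (deriv (f x)))"
    and A4_L2: "(\<integral>\<^sup>+z. (\<integral>\<^sup>+x. ennreal ((deriv (deriv (f x)) z)^2) \<partial>PX) \<partial>lborel) < \<infinity>"
  shows "\<forall>a b::real. a < b \<longrightarrow> (\<exists>C::real. \<forall>h>0. \<exists>R. op_one M R \<and>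
           (\<forall>n. \<forall>w \<in> space M.
              (\<integral>\<^sup>+z\<in>{a..b}. (\<integral>\<^sup>+x. ennreal ((ghat n h w z x - f x z)^2) \<partial>PX) \<partial>lborel)
                \<le> ennreal (R n w + C * h^4)))"
proof -
  have PX_fin: "sigma_finite_measure PX"
    using PX by (rule prob_space_imp_sigma_finite)
  have K_meas': "K \<in> borel_measurable borel"
    using K_meas by simp
  define m2 where "m2 = (\<integral>u. u\<^sup>2 * K u \<partial>lborel)"
  obtain l where L2: "(\<integral>\<^sup>+z. \<integral>\<^sup>+x. ennreal ((deriv (deriv (f x)) z)\<^sup>2) \<partial>PX \<partial>lborel) = ennreal l"
    and "l \<ge> 0"
    using A4_L2 by (cases rule: ennreal_cases) auto
  have bias: "2 * (\<integral>\<^sup>+z. \<integral>\<^sup>+x. ennreal ((gh K f h z x - f x z)\<^sup>2) \<partial>PX \<partial>lborel)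
      \<le> ennreal (8 * m2\<^sup>2 * l * h^4)" if "h > 0" for h
  proof -
    have "8 * m2\<^sup>2 * l * h^4 = 2 * ((2 * h\<^sup>2 * m2)\<^sup>2 * l)"
      by (simp add: power_mult_distrib power2_eq_square power4_eq_xxxx mult_ac)
    then have "ennreal (8 * m2\<^sup>2 * l * h^4) = 2 * (ennreal ((2 * h\<^sup>2 * m2)\<^sup>2) * ennreal l)"
      using \<open>l \<ge> 0\<close> by (simp only: ennreal_mult' zero_le_power2 zero_le_numeral ennreal_numeral)
    then show ?thesis
      unfolding m2_def L2[symmetric]
      by (simp only:) (intro mult_left_mono nn_integral_conditional_bias_sq_le[OF PX_fin f_meas A4_diff1
          A4_diff2 A4_cont K_meas' K_nonneg K_int K_one A3_first A3_second that] zero_le)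
  qed
  show ?thesis
  proof (intro allI impI exI[of _ "8 * m2\<^sup>2 * l"])
    fix a b h :: real assume "a < b" "h > 0"
    define S where "S n w = enn2real (SUP z\<in>\<rat> \<inter> {a..b}. ennreal (Qn PX K f ghat n h w z))" for n w
    have "op_one M (\<lambda>n w. 2 * (b - a) * S n w)"
      unfolding S_def using \<open>a < b\<close> \<open>h > 0\<close>
      by (intro op_one_cmult op_one_SUP_Rats_Icc M A1 A2_diff A2_bound) auto
    moreover have "(\<integral>\<^sup>+z\<in>{a..b}. (\<integral>\<^sup>+x. ennreal ((ghat n h w z x - f x z)\<^sup>2) \<partial>PX) \<partial>lborel)
        \<le> ennreal (2 * (b - a) * S n w + 8 * m2\<^sup>2 * l * h^4)" if w: "w \<in> space M" for n w
    proof -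
      have "Qn PX K f ghat n h w z \<le> S n w" if "z \<in> {a..b}" for z
        unfolding S_def using A2_diff[OF \<open>h > 0\<close> w]
        by (intro le_enn2real_SUP_Rats_Icc \<open>a < b\<close> that differentiable_imp_continuous_on)
          (simp add: differentiable_on_def)
      then have "(\<integral>\<^sup>+z\<in>{a..b}. (\<integral>\<^sup>+x. ennreal ((ghat n h w z x - f x z)\<^sup>2) \<partial>PX) \<partial>lborel)
          \<le> ennreal (2 * (b - a) * S n w) +
            2 * (\<integral>\<^sup>+z. \<integral>\<^sup>+x. ennreal ((gh K f h z x - f x z)\<^sup>2) \<partial>PX \<partial>lborel)"
        using \<open>a < b\<close>
        by (intro nn_integral_Icc_sq_error_le[OF PX_fin _ Q_int[OF \<open>h > 0\<close> w] _
              measurable_conditional_bias_sq[OF f_meas K_meas']]) (auto simp: Qn_def)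
      also have "\<dots> \<le> ennreal (2 * (b - a) * S n w) + ennreal (8 * m2\<^sup>2 * l * h^4)"
        using bias[OF \<open>h > 0\<close>] by (rule add_left_mono)
      also have "\<dots> = ennreal (2 * (b - a) * S n w + 8 * m2\<^sup>2 * l * h^4)"
        using \<open>a < b\<close> \<open>l \<ge> 0\<close> by (intro ennreal_plus[symmetric]) (simp_all add: S_def)
      finally show ?thesis .
    qed
    ultimately show "\<exists>R. op_one M R \<and> (\<forall>n. \<forall>w\<in>space M.
        (\<integral>\<^sup>+z\<in>{a..b}. (\<integral>\<^sup>+x. ennreal ((ghat n h w z x - f x z)\<^sup>2) \<partial>PX) \<partial>lborel)
          \<le> ennreal (R n w + 8 * m2\<^sup>2 * l * h^4))"
      by blast
  qed
qed

end
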